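(* Let $\alpha\subseteq E$, let $\hat{\mathbb{G}},\mathbb{G}$ be $E$-groups and let $h:\hat{\mathbb{G}}[\alpha]\to\mathbb{G}[\alpha]$ be a group homomorphism with $h(e)=e$ for all $e\in\alpha$ whose restriction to $\hat{\mathbb{G}}[\alpha']$ is injective for every $\alpha'\subsetneq\alpha$. If $\mathbb{G}[\alpha]$ is $N$-acyclic (as an $\alpha$-group) for some $N\ge2$, then $\hat{\mathbb{G}}[\alpha]$ is $N$-acyclic.
   Context: Let $E$ be a finite set. An $E$-group is a group $\mathbb{G}$ together with an inclusion $E\subseteq\mathbb{G}$ such that $E$ generates $\mathbb{G}$ and every $e\in E$ satisfies $e\neq1$, $e^2=1$. For $\alpha\subseteq E$, $\mathbb{G}[\alpha]$ is the subgroup generated by $\alpha$, itself an $\alpha$-group. A coset cycle of length $n\ge2$ in an $\alpha$-group $\mathbb{K}$ is a cyclically indexed family $(g_i,\alpha_i)_{i\in\mathbb{Z}_n}$ with $g_i\in\mathbb{K}$, $\alpha_i\subseteq\alpha$, such that for all $i$: $g_{i+1}\in g_i\mathbb{K}[\alpha_i]$ and $g_i\mathbb{K}[\alpha_i\cap\alpha_{i-1}]\cap g_{i+1}\mathbb{K}[\alpha_i\cap\alpha_{i+1}]=\emptyset$. $\mathbb{K}$ is $N$-acyclic if it admits no coset cycle of length $n$ with $2\le n\le N$. *)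

theory Defs
  imports "HOL-Algebra.Algebra"
begin

definition E_group :: "('a, 'm) monoid_scheme \<Rightarrow> 'e set \<Rightarrow> ('e \<Rightarrow> 'a) \<Rightarrow> bool" where
  "E_group G E emb \<longleftrightarrow> group G \<and> finite E \<and> inj_on emb E \<and> emb ` E \<subseteq> carrier G \<and>
     generate G (emb ` E) = carrier G \<and>
     (\<forall>e\<in>E. emb e \<noteq> \<one>\<^bsub>G\<^esub> \<and> emb e \<otimes>\<^bsub>G\<^esub> emb e = \<one>\<^bsub>G\<^esub>)"

definition subgrp :: "('a, 'm) monoid_scheme \<Rightarrow> ('e \<Rightarrow> 'a) \<Rightarrow> 'e set \<Rightarrow> ('a, 'm) monoid_scheme" where
  "subgrp G emb \<alpha> = G\<lparr>carrier := generate G (emb ` \<alpha>)\<rparr>"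

definition coset_cycle :: "('a, 'm) monoid_scheme \<Rightarrow> ('e \<Rightarrow> 'a) \<Rightarrow> 'e set \<Rightarrow> nat
    \<Rightarrow> (nat \<Rightarrow> 'a) \<Rightarrow> (nat \<Rightarrow> 'e set) \<Rightarrow> bool" where
  "coset_cycle K emb \<alpha> n g a \<longleftrightarrow> 2 \<le> n \<and>
     (\<forall>i<n. g i \<in> carrier K \<and> a i \<subseteq> \<alpha> \<and>
        g (Suc i mod n) \<in> g i <#\<^bsub>K\<^esub> generate K (emb ` a i) \<and>
        (g i <#\<^bsub>K\<^esub> generate K (emb ` (a i \<inter> a ((i + n - 1) mod n))))
        \<inter> (g (Suc i mod n) <#\<^bsub>K\<^esub> generate K (emb ` (a i \<inter> a (Suc i mod n)))) = {})"

definition N_acyclic :: "('a, 'm) monoid_scheme \<Rightarrow> ('e \<Rightarrow> 'a) \<Rightarrow> 'e set \<Rightarrow> nat \<Rightarrow> bool" where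
  "N_acyclic K emb \<alpha> N \<longleftrightarrow> (\<forall>n g a. 2 \<le> n \<and> n \<le> N \<longrightarrow> \<not> coset_cycle K emb \<alpha> n g a)"

end

theory Submission
  imports Defs
begin

text \<open>No coset cycle can carry the full label \<alpha>: if \<alpha>_i = \<alpha>, the cycle condition at the
  preceding index puts g_(i-1) into two cosets that are required to be disjoint.
  So every coset of a cycle in Gh[\<alpha>] lies in a coset of some Gh[\<alpha>_i] with \<alpha>_i \<subset> \<alpha>,
  on which h is injective; hence h preserves the disjointness conditions. As h maps Gh[\<beta>]
  onto G[\<beta>], it turns a coset cycle of Gh[\<alpha>] into one of G[\<alpha>] of the same length.\<close>

lemma Suc_pred_mod:
  assumes "i < n"
  shows "Suc ((i + n - 1) mod n) mod n = i"
proof (cases i)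
  case 0
  with assms show ?thesis by (simp add: mod_Suc)
next
  case (Suc k)
  with assms have "(i + n - 1) mod n = k" by simp
  with Suc assms show ?thesis by simp
qed

lemma (in group_hom) inj_on_l_coset:
  assumes "inj_on h S" and "S \<subseteq> carrier G" and "a \<in> carrier G"
  shows "inj_on h (a <# S)"
proof (rule inj_onI)
  fix x y assume "x \<in> a <# S" "y \<in> a <# S" and eq: "h x = h y"
  then obtain s t where st: "s \<in> S" "t \<in> S" "x = a \<otimes> s" "y = a \<otimes> t"
    unfolding l_coset_def by blast
  with assms eq have "h a \<otimes>\<^bsub>H\<^esub> h s = h a \<otimes>\<^bsub>H\<^esub> h t" by (auto simp: subsetD)
  with assms st have "h s = h t" by (auto simp: subsetD)
  with assms st show "x = y" by (auto dest: inj_onD)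
qed

lemma (in group_hom) disjoint_l_cosets_image:
  assumes S: "subgroup S G" "inj_on h S" and T: "T \<subseteq> S" "U \<subseteq> S"
    and a: "a \<in> carrier G" and b: "b \<in> a <# S"
    and disj: "(a <# T) \<inter> (b <# U) = {}"
  shows "(h a <#\<^bsub>H\<^esub> h ` T) \<inter> (h b <#\<^bsub>H\<^esub> h ` U) = {}"
proof -
  have bG: "b \<in> carrier G" using b a S(1) by (meson G.l_coset_subset_G subgroup.subset subsetD)
  have sub: "a <# T \<subseteq> a <# S" "b <# U \<subseteq> a <# S"
    using T G.l_repr_independence[OF b a S(1)] unfolding l_coset_def by blast+
  have "h ` (a <# T) \<inter> h ` (b <# U) = {}"
    using inj_on_image_Int[OF inj_on_l_coset[OF S(2) subgroup.subset[OF S(1)] a] sub] disj by simp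
  moreover have "T \<subseteq> carrier G" "U \<subseteq> carrier G" using T subgroup.subset[OF S(1)] by auto
  ultimately show ?thesis using a bG by (simp add: coset_hom[OF homh])
qed

lemma (in group) coset_cycle_label_neq:
  assumes emb: "emb ` \<alpha> \<subseteq> carrier G" and cyc: "coset_cycle G emb \<alpha> n g a" and i: "i < n"
  shows "a i \<noteq> \<alpha>"
proof
  assume ai: "a i = \<alpha>"
  define j where "j = (i + n - 1) mod n"
  have j: "j < n" "Suc j mod n = i" using i Suc_pred_mod[OF i] unfolding j_def by auto
  then have gj: "g j \<in> carrier G" and aj: "a j \<subseteq> \<alpha>"
    and step: "g i \<in> g j <# generate G (emb ` a j)"
    and disj: "(g j <# generate G (emb ` (a j \<inter> a ((j + n - 1) mod n))))
                 \<inter> (g i <# generate G (emb ` (a j \<inter> a i))) = {}"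
    using cyc unfolding coset_cycle_def by auto
  have sub: "subgroup (generate G (emb ` \<beta>)) G" if "\<beta> \<subseteq> \<alpha>" for \<beta>
    using generate_is_subgroup emb that by blast
  have "g i <# generate G (emb ` (a j \<inter> a i)) = g j <# generate G (emb ` a j)"
    using ai aj l_repr_independence[OF step gj sub[OF aj]] by (simp add: Int_absorb2)
  then show False
    using disj lcos_self[OF gj] sub aj by blast
qed

lemma (in group_hom) coset_cycle_image:
  assumes emb: "embG ` \<alpha> \<subseteq> carrier G" and gens: "\<forall>e\<in>\<alpha>. h (embG e) = embH e"
    and inj: "\<forall>\<beta>. \<beta> \<subset> \<alpha> \<longrightarrow> inj_on h (generate G (embG ` \<beta>))"
    and cyc: "coset_cycle G embG \<alpha> n g a"
  shows "coset_cycle H embH \<alpha> n (h \<circ> g) a"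
  unfolding coset_cycle_def
proof (intro conjI allI impI)
  show "2 \<le> n" using cyc unfolding coset_cycle_def by simp
  fix i assume i: "i < n"
  define S where "S \<beta> = generate G (embG ` \<beta>)" for \<beta>
  define shared_prev where "shared_prev = a i \<inter> a ((i + n - 1) mod n)"
  define shared_next where "shared_next = a i \<inter> a (Suc i mod n)"
  have gi: "g i \<in> carrier G" and ai: "a i \<subseteq> \<alpha>"
    and step: "g (Suc i mod n) \<in> g i <# S (a i)"
    and disj: "(g i <# S shared_prev) \<inter> (g (Suc i mod n) <# S shared_next) = {}"
    using cyc i unfolding coset_cycle_def S_def shared_prev_def shared_next_def by auto
  have sub: "subgroup (S \<beta>) G" if "\<beta> \<subseteq> \<alpha>" for \<beta>
    unfolding S_def using G.generate_is_subgroup emb that by blast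
  have img: "h ` S \<beta> = generate H (embH ` \<beta>)" if "\<beta> \<subseteq> \<alpha>" for \<beta>
  proof -
    have "h ` embG ` \<beta> = embH ` \<beta>" using that gens by (force simp: image_image)
    moreover have "embG ` \<beta> \<subseteq> carrier G" using emb that by blast
    ultimately show ?thesis unfolding S_def using generate_img by metis
  qed
  have mono: "S \<beta> \<subseteq> S (a i)" if "\<beta> \<subseteq> a i" for \<beta>
    unfolding S_def using G.mono_generate emb ai that by (meson image_mono subset_trans)
  have inj_ai: "inj_on h (S (a i))"
    using inj ai G.coset_cycle_label_neq[OF emb cyc i] unfolding S_def by blast
  show "(h \<circ> g) i \<in> carrier H" using gi by simp
  show "a i \<subseteq> \<alpha>" using ai .
  show "(h \<circ> g) (Suc i mod n) \<in> (h \<circ> g) i <#\<^bsub>H\<^esub> generate H (embH ` a i)"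
    using step coset_hom[OF homh subgroup.subset[OF sub[OF ai]] gi] img[OF ai] by auto
  show "((h \<circ> g) i <#\<^bsub>H\<^esub> generate H (embH ` (a i \<inter> a ((i + n - 1) mod n))))
      \<inter> ((h \<circ> g) (Suc i mod n) <#\<^bsub>H\<^esub> generate H (embH ` (a i \<inter> a (Suc i mod n)))) = {}"
    using disjoint_l_cosets_image[OF sub[OF ai] inj_ai mono mono gi step disj] ai
    unfolding shared_prev_def shared_next_def by (simp add: img le_infI1)
qed

lemma (in group) group_subgrp:
  assumes "emb ` \<alpha> \<subseteq> carrier G"
  shows "group (subgrp G emb \<alpha>)"
  unfolding subgrp_def using subgroup.subgroup_is_group[OF generate_is_subgroup[OF assms]] is_group .

lemma (in group) generate_subgrp:
  assumes "emb ` \<alpha> \<subseteq> carrier G" and "\<beta> \<subseteq> \<alpha>"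
  shows "generate (subgrp G emb \<alpha>) (emb ` \<beta>) = generate G (emb ` \<beta>)"
proof -
  have "emb ` \<beta> \<subseteq> generate G (emb ` \<alpha>)"
    using generate.incl[of _ "emb ` \<alpha>" G] assms(2) by blast
  then show ?thesis
    unfolding subgrp_def using generate_consistent generate_is_subgroup[OF assms(1)] by blast
qed

lemma image_subset_carrier_subgrp: "emb ` \<alpha> \<subseteq> carrier (subgrp G emb \<alpha>)"
  unfolding subgrp_def by (auto intro: generate.incl)

lemma E_group_image_subset_carrier:
  assumes "E_group G E emb" and "\<alpha> \<subseteq> E"
  shows "emb ` \<alpha> \<subseteq> carrier G"
  using assms unfolding E_group_def by (meson image_mono subset_trans)

theorem mainTheorem7:
  fixes Gh :: "'a monoid" and G :: "'b monoid" and E :: "'e set"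
    and embh :: "'e \<Rightarrow> 'a" and emb :: "'e \<Rightarrow> 'b" and h :: "'a \<Rightarrow> 'b"
    and \<alpha> :: "'e set" and N :: nat
  assumes "E_group Gh E embh" and "E_group G E emb" and "\<alpha> \<subseteq> E"
    and "h \<in> hom (subgrp Gh embh \<alpha>) (subgrp G emb \<alpha>)"
    and "\<forall>e\<in>\<alpha>. h (embh e) = emb e"
    and "\<forall>\<alpha>'. \<alpha>' \<subset> \<alpha> \<longrightarrow> inj_on h (generate Gh (embh ` \<alpha>'))"
    and "N \<ge> 2"
    and "N_acyclic (subgrp G emb \<alpha>) emb \<alpha> N"
  shows "N_acyclic (subgrp Gh embh \<alpha>) embh \<alpha> N"
proof -
  have "group Gh" "group G" using assms(1,2) unfolding E_group_def by auto
  have embh: "embh ` \<alpha> \<subseteq> carrier Gh" and emb: "emb ` \<alpha> \<subseteq> carrier G"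
    using assms(1-3) E_group_image_subset_carrier by blast+
  have hom: "group_hom (subgrp Gh embh \<alpha>) (subgrp G emb \<alpha>) h"
    using group.group_subgrp[OF \<open>group Gh\<close> embh] group.group_subgrp[OF \<open>group G\<close> emb] assms(4)
    unfolding group_hom_def group_hom_axioms_def by blast
  have inj: "\<forall>\<beta>. \<beta> \<subset> \<alpha> \<longrightarrow> inj_on h (generate (subgrp Gh embh \<alpha>) (embh ` \<beta>))"
    using assms(6) group.generate_subgrp[OF \<open>group Gh\<close> embh] by auto
  show ?thesis
    using group_hom.coset_cycle_image[OF hom image_subset_carrier_subgrp assms(5) inj] assms(8)
    unfolding N_acyclic_def by blast
qed

end
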